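(* If $R$ is a weakly generalized p.q.-Baer $*$-ring, then the involution of $R$ is quasi-proper, i.e. for $x\in R$, $xRx^*=0$ implies $x^n=0$ for some $n\in\mathbb N$.
   Context: A $*$-ring is a ring with an involution; a projection is $e$ with $e=e^*=e^2$. A $*$-ring $R$ is a weakly generalized p.q.-Baer $*$-ring if for every $x\in R$ there exist a central projection $e$ and $n\in\mathbb N$ such that $x^ne=x^n$ and, for all $y\in R$, $(xR)^ny=\{0\}$ if and only if $ey=0$. ($R$ need not have a unity.) *)

theory Defs
  imports Main
begin

text \<open>Rings need not have a unity: we use the type class ring (no 1).
  Positive powers x^n (n \<ge> 1) are defined explicitly; the value at n = 0 is
  a dummy and is never used (all uses are guarded by n \<ge> 1).\<close>

fun npow :: "'a::ring \<Rightarrow> nat \<Rightarrow> 'a" where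
  "npow x 0 = 0"
| "npow x (Suc 0) = x"
| "npow x (Suc (Suc n)) = npow x (Suc n) * x"

definition involution :: "('a::ring \<Rightarrow> 'a) \<Rightarrow> bool" where
  "involution s \<longleftrightarrow> (\<forall>x y. s (x + y) = s x + s y) \<and> (\<forall>x y. s (x * y) = s y * s x)
     \<and> (\<forall>x. s (s x) = x)"

definition central_projection :: "('a::ring \<Rightarrow> 'a) \<Rightarrow> 'a \<Rightarrow> bool" where
  "central_projection s e \<longleftrightarrow> e = s e \<and> e * e = e \<and> (\<forall>z. e * z = z * e)"

text \<open>The products x r_1 x r_2 ... x r_n (n \<ge> 1), generating (xR)^n.\<close>
fun xRpow :: "'a::ring \<Rightarrow> nat \<Rightarrow> 'a set" where
  "xRpow x 0 = {}"
| "xRpow x (Suc 0) = {x * r | r. True}"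
| "xRpow x (Suc (Suc n)) = {a * (x * r) | a r. a \<in> xRpow x (Suc n)}"

definition xRpow_ann :: "'a::ring \<Rightarrow> nat \<Rightarrow> 'a \<Rightarrow> bool" where
  "xRpow_ann x n y \<longleftrightarrow> (\<forall>a \<in> xRpow x n. a * y = 0)"

definition weakly_gen_pq_Baer :: "('a::ring \<Rightarrow> 'a) \<Rightarrow> bool" where
  "weakly_gen_pq_Baer s \<longleftrightarrow> involution s \<and>
     (\<forall>x. \<exists>e n. central_projection s e \<and> n \<ge> 1 \<and> npow x n * e = npow x n \<and>
          (\<forall>y. xRpow_ann x n y \<longleftrightarrow> e * y = 0))"

definition quasi_proper :: "('a::ring \<Rightarrow> 'a) \<Rightarrow> bool" where
  "quasi_proper s \<longleftrightarrow> (\<forall>x. (\<forall>r. x * r * s x = 0) \<longrightarrow> (\<exists>n\<ge>1. npow x n = 0))"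

end

theory Submission
  imports Defs
begin

text \<open>Apply the defining property of \<open>R\<close> with \<open>y = x\<^sup>*\<close>: every generator of \<open>(xR)\<^sup>n\<close>
  ends in a factor \<open>x r\<close>, so \<open>xRx\<^sup>* = 0\<close> gives \<open>(xR)\<^sup>n x\<^sup>* = 0\<close> and hence \<open>e x\<^sup>* = 0\<close>.
  Applying the involution and using \<open>e = e\<^sup>*\<close> yields \<open>x e = 0\<close>, so
  \<open>x\<^sup>n = x\<^sup>n e = x\<^bsup>n-1\<^esup> (x e) = 0\<close>.\<close>

lemma involution_zero:
  assumes "involution s"
  shows "s 0 = 0"
proof -
  have "s (0 + 0) = s 0 + s 0" using assms unfolding involution_def by blast
  then show ?thesis by simp
qed

lemma npow_mult_eq_zero:
  fixes x e :: "'a::ring"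
  assumes "x * e = 0" "n \<ge> 1"
  shows "npow x n * e = 0"
proof -
  have "npow x (Suc m) * e = 0" for m
  proof (induction m)
    case 0
    then show ?case using assms(1) by simp
  next
    case (Suc m)
    have "npow x (Suc (Suc m)) * e = npow x (Suc m) * (x * e)" by (simp add: mult.assoc)
    then show ?case using assms(1) by simp
  qed
  moreover obtain m where "n = Suc m" using assms(2) by (cases n) auto
  ultimately show ?thesis by simp
qed

lemma xRpow_ann_if_mult_right_zero:
  fixes x y :: "'a::ring"
  assumes "\<forall>r. x * r * y = 0"
  shows "xRpow_ann x n y"
  unfolding xRpow_ann_def
proof
  fix a assume a: "a \<in> xRpow x n"
  show "a * y = 0"
  proof (cases "(x, n)" rule: xRpow.cases)
    case (2 x')
    then show ?thesis using a assms by auto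
  next
    case (3 x' m)
    then obtain b r where "a = b * (x * r)" using a by auto
    then show ?thesis using assms by (simp add: mult.assoc)
  qed (use a in auto)
qed

lemma mult_central_projection_eq_zero:
  assumes "involution s" "central_projection s e" "e * s x = 0"
  shows "x * e = 0"
proof -
  have "s (e * s x) = x * e"
    using assms(1,2) unfolding involution_def central_projection_def by metis
  with assms(3) show ?thesis by (simp add: involution_zero[OF assms(1)])
qed

theorem mainTheorem8:
  fixes s :: "'a::ring \<Rightarrow> 'a"
  assumes "weakly_gen_pq_Baer s"
  shows "quasi_proper s"
  unfolding quasi_proper_def
proof (intro allI impI)
  fix x
  assume xRx_star: "\<forall>r. x * r * s x = 0"
  have inv: "involution s" using assms unfolding weakly_gen_pq_Baer_def by blast
  obtain e n where e: "central_projection s e" and n: "n \<ge> 1"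
    and xn_e: "npow x n * e = npow x n" and ann: "\<forall>y. xRpow_ann x n y \<longleftrightarrow> e * y = 0"
    using assms unfolding weakly_gen_pq_Baer_def by blast
  have "e * s x = 0" using ann xRpow_ann_if_mult_right_zero[OF xRx_star] by blast
  then have "x * e = 0" using mult_central_projection_eq_zero inv e by blast
  then have "npow x n * e = 0" using npow_mult_eq_zero n by blast
  then show "\<exists>n\<ge>1. npow x n = 0" using xn_e n by auto
qed

end
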